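(* Let $\mathcal{P}$ be a collection of cells with maximal rectangles $\mathcal{B}_1,\dots,\mathcal{B}_p$ and switching rook polynomial $\sum_{j=0}^d\tilde r_j(\mathcal{P})t^j$, $d=r(\mathcal{P})$. Suppose $\tilde r_d(\mathcal{P})=1$, and let $\mathcal{T}$ be the unique canonical $r(\mathcal{P})$-rook configuration in $\mathcal{P}$ with respect to $\mathcal{B}_1,\dots,\mathcal{B}_p$. Then: (1) every column of $\mathcal{P}$ contains a cell occupied by a rook of $\mathcal{T}$, and every row of $\mathcal{P}$ contains a cell occupied by a rook of $\mathcal{T}$; (2) if $R$ is a rook placed in a cell of $\mathcal{P}$ not occupied by any rook of $\mathcal{T}$, then there exist exactly two rooks of $\mathcal{T}$ that are in attacking position with $R$.
   Context: A cell is $[a,a+(1,1)]\subset\mathbb{R}^2$ with $a\in\mathbb{Z}^2$ its lower left corner; a collection of cells is a non-empty finite set of cells. For lower left corners $a\le b$, the rectangle $[A,B]$ is the set of cells whose lower left corner $c$ satisfies $a\le c\le b$. A row (resp. column) of $\mathcal{P}$ is an inclusion-maximal rectangle of cells of $\mathcal{P}$ all having the same second (resp. first) lower-left coordinate. A maximal rectangle of $\mathcal{P}$ is a rectangle of cells of $\mathcal{P}$ not properly contained in another such. Two rooks on distinct cells attack each other if some row or column of $\mathcal{P}$ contains both cells; a $k$-rook configuration is a set of $k$ pairwise non-attacking rooks on distinct cells of $\mathcal{P}$; $r(\mathcal{P})$ is the max $k$. A switch moves two rooks of a configuration occupying the lower-left and upper-right (resp. upper-left and lower-right) corner cells of a rectangle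 all of whose cells lie in $\mathcal{P}$ to the other two corner cells; $\tilde r_k(\mathcal{P})$ is the number of classes of $k$-rook configurations modulo sequences of switches. Canonical configuration with respect to the ordering $\mathcal{B}_1,\dots,\mathcal{B}_p$: starting from a configuration, for $i=1,\dots,p$ in turn, the rooks currently lying in $\mathcal{B}_i$, occupying cells with first coordinates $x_1<\dots<x_r$ and second coordinates $y_1<\dots<y_r$, are replaced by rooks on the cells with lower left corners $(x_1,y_1),\dots,(x_r,y_r)$; the result is the canonical configuration of the starting one, and it is equivalent to it up to switches. *)

theory Defs
  imports Main
begin

text \<open>A cell is identified with its lower left corner in \<open>int \<times> int\<close>;
  a collection of cells is a finite non-empty set of such corners.\<close>

type_synonym cell = "int \<times> int"

definition collection :: "cell set \<Rightarrow> bool" where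
  "collection P \<longleftrightarrow> finite P \<and> P \<noteq> {}"

definition rect :: "cell \<Rightarrow> cell \<Rightarrow> cell set" where
  "rect a b = {c. fst a \<le> fst c \<and> fst c \<le> fst b \<and> snd a \<le> snd c \<and> snd c \<le> snd b}"

definition is_rect_in :: "cell set \<Rightarrow> cell set \<Rightarrow> bool" where
  "is_rect_in P R \<longleftrightarrow> (\<exists>a b. fst a \<le> fst b \<and> snd a \<le> snd b \<and> R = rect a b) \<and> R \<subseteq> P"

definition is_max_rect :: "cell set \<Rightarrow> cell set \<Rightarrow> bool" where
  "is_max_rect P R \<longleftrightarrow> is_rect_in P R \<and> \<not> (\<exists>R'. is_rect_in P R' \<and> R \<subset> R')"

definition is_hrect_in :: "cell set \<Rightarrow> cell set \<Rightarrow> bool" where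
  "is_hrect_in P R \<longleftrightarrow> is_rect_in P R \<and> (\<forall>c\<in>R. \<forall>d\<in>R. snd c = snd d)"

definition is_vrect_in :: "cell set \<Rightarrow> cell set \<Rightarrow> bool" where
  "is_vrect_in P R \<longleftrightarrow> is_rect_in P R \<and> (\<forall>c\<in>R. \<forall>d\<in>R. fst c = fst d)"

definition is_row :: "cell set \<Rightarrow> cell set \<Rightarrow> bool" where
  "is_row P R \<longleftrightarrow> is_hrect_in P R \<and> \<not> (\<exists>R'. is_hrect_in P R' \<and> R \<subset> R')"

definition is_col :: "cell set \<Rightarrow> cell set \<Rightarrow> bool" where
  "is_col P R \<longleftrightarrow> is_vrect_in P R \<and> \<not> (\<exists>R'. is_vrect_in P R' \<and> R \<subset> R')"

definition attacks :: "cell set \<Rightarrow> cell \<Rightarrow> cell \<Rightarrow> bool" where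
  "attacks P c d \<longleftrightarrow> c \<noteq> d \<and>
     (\<exists>R. (is_row P R \<or> is_col P R) \<and> c \<in> R \<and> d \<in> R)"

definition rook_config :: "cell set \<Rightarrow> nat \<Rightarrow> cell set \<Rightarrow> bool" where
  "rook_config P k C \<longleftrightarrow> C \<subseteq> P \<and> finite C \<and> card C = k \<and>
     (\<forall>c\<in>C. \<forall>d\<in>C. \<not> attacks P c d)"

definition rook_number :: "cell set \<Rightarrow> nat" where
  "rook_number P = Max {k. \<exists>C. rook_config P k C}"

text \<open>A switch: rooks at a and b occupy opposite corners of a rectangle contained in P
  (lower-left/upper-right if snd a < snd b, upper-left/lower-right if snd a > snd b);
  they are moved to the other two corners.\<close>
definition switch :: "cell set \<Rightarrow> cell set \<Rightarrow> cell set \<Rightarrow> bool" where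
  "switch P C C' \<longleftrightarrow> (\<exists>a b. a \<in> C \<and> b \<in> C \<and> fst a < fst b \<and> snd a \<noteq> snd b \<and>
     rect (fst a, min (snd a) (snd b)) (fst b, max (snd a) (snd b)) \<subseteq> P \<and>
     C' = (C - {a, b}) \<union> {(fst a, snd b), (fst b, snd a)})"

definition switch_equiv :: "cell set \<Rightarrow> nat \<Rightarrow> (cell set \<times> cell set) set" where
  "switch_equiv P k = {(C, C'). rook_config P k C \<and> rook_config P k C' \<and> (switch P)\<^sup>*\<^sup>* C C'}"

definition switching_rook_coeff :: "cell set \<Rightarrow> nat \<Rightarrow> nat" where
  "switching_rook_coeff P k = card ({C. rook_config P k C} // switch_equiv P k)"

definition canon_step :: "cell set \<Rightarrow> cell set \<Rightarrow> cell set" where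
  "canon_step B C = (C - B) \<union>
     set (zip (sorted_list_of_set (fst ` (C \<inter> B))) (sorted_list_of_set (snd ` (C \<inter> B))))"

definition canonical :: "cell set list \<Rightarrow> cell set \<Rightarrow> cell set" where
  "canonical Bs C = fold canon_step Bs C"

end

theory Submission
  imports Defs
begin

text \<open>The canonical configuration only rearranges the rooks inside each maximal rectangle, so it
  is again a rook configuration of maximal size \<open>r(P)\<close>. A switch never moves a rook into an empty
  row or column: each new rook shares its column with one old rook and its row with the other, and
  is joined to both through the switching rectangle. Since \<open>r(P)\<close>-configurations form a single
  switching class, they are all reachable from \<open>T\<close>. Suppose the column or the row of a cell \<open>c\<close>
  carries no rook of \<open>T\<close>. If both are free, a rook on \<open>c\<close> can be added, contradicting maximality;
  otherwise moving the rook of the occupied one to \<open>c\<close> gives an \<open>r(P)\<close>-configuration occupying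
  the free line, which switches cannot reach from \<open>T\<close>. Hence every row and column is occupied,
  and a free cell is attacked exactly by the rook of its row and the rook of its column.\<close>

lemma swap_rect: "prod.swap ` rect a b = rect (prod.swap a) (prod.swap b)"
  unfolding rect_def by (auto simp: image_iff prod_eq_iff)

lemma swap_image_swap [simp]: "prod.swap ` prod.swap ` A = A"
  by (simp add: image_image)

lemma is_rect_in_swapI: "is_rect_in P R \<Longrightarrow> is_rect_in (prod.swap ` P) (prod.swap ` R)"
proof -
  assume "is_rect_in P R"
  then obtain a b where "fst a \<le> fst b" "snd a \<le> snd b" "R = rect a b" "R \<subseteq> P"
    unfolding is_rect_in_def by blast
  then have "fst (prod.swap a) \<le> fst (prod.swap b) \<and> snd (prod.swap a) \<le> snd (prod.swap b)
      \<and> prod.swap ` R = rect (prod.swap a) (prod.swap b) \<and> prod.swap ` R \<subseteq> prod.swap ` P"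
    by (simp add: image_mono flip: swap_rect)
  then show ?thesis
    unfolding is_rect_in_def by blast
qed

lemma is_rect_in_swap: "is_rect_in (prod.swap ` P) (prod.swap ` R) \<longleftrightarrow> is_rect_in P R"
  using is_rect_in_swapI[of "prod.swap ` P" "prod.swap ` R"] is_rect_in_swapI[of P R] by auto

lemma is_col_swap: "is_col (prod.swap ` P) (prod.swap ` K) \<longleftrightarrow> is_row P K"
proof -
  have vrect: "is_vrect_in (prod.swap ` P) (prod.swap ` R) \<longleftrightarrow> is_hrect_in P R" for R
    unfolding is_vrect_in_def is_hrect_in_def is_rect_in_swap by auto
  have "prod.swap ` K \<subset> prod.swap ` R \<longleftrightarrow> K \<subset> R" for R
    by (simp add: inj_image_subset_iff psubset_eq inj_image_eq_iff)
  then have "(\<exists>R'. is_vrect_in (prod.swap ` P) R' \<and> prod.swap ` K \<subset> R')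
      \<longleftrightarrow> (\<exists>R. is_hrect_in P R \<and> K \<subset> R)"
    using vrect by (metis swap_image_swap)
  then show ?thesis
    unfolding is_col_def is_row_def vrect by blast
qed

lemma col_fst_eq: "is_col P K \<Longrightarrow> u \<in> K \<Longrightarrow> v \<in> K \<Longrightarrow> fst u = fst v"
  unfolding is_col_def is_vrect_in_def by blast

lemma row_snd_eq: "is_row P K \<Longrightarrow> u \<in> K \<Longrightarrow> v \<in> K \<Longrightarrow> snd u = snd v"
  unfolding is_row_def is_hrect_in_def by blast

lemma is_rect_in_rectI:
  "fst a \<le> fst b \<Longrightarrow> snd a \<le> snd b \<Longrightarrow> rect a b \<subseteq> P \<Longrightarrow> is_rect_in P (rect a b)"
  unfolding is_rect_in_def by blast

lemma is_rect_in_nonempty: "is_rect_in P R \<Longrightarrow> R \<noteq> {}"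
  unfolding is_rect_in_def rect_def by force

lemma line_subset: "is_row P M \<or> is_col P M \<Longrightarrow> M \<subseteq> P"
  unfolding is_row_def is_col_def is_hrect_in_def is_vrect_in_def is_rect_in_def by blast

lemma line_nonempty: "is_row P M \<or> is_col P M \<Longrightarrow> M \<noteq> {}"
  unfolding is_row_def is_col_def is_hrect_in_def is_vrect_in_def using is_rect_in_nonempty by blast

lemma col_exists:
  assumes "finite P" "u \<in> P"
  obtains K where "is_col P K" "u \<in> K"
proof -
  let ?S = "{R. is_vrect_in P R \<and> u \<in> R}"
  have "finite ?S"
    using \<open>finite P\<close> by (rule finite_subset[rotated, OF finite_Pow_iff[THEN iffD2]])
      (auto simp: is_vrect_in_def is_rect_in_def)
  moreover have "rect u u \<in> ?S"
    using \<open>u \<in> P\<close> by (auto simp: is_vrect_in_def is_rect_in_def rect_def prod_eq_iff)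
  ultimately obtain K where "K \<in> ?S" "\<forall>R\<in>?S. K \<subseteq> R \<longrightarrow> K = R"
    using finite_has_maximal[of ?S] by blast
  then have "is_col P K" "u \<in> K"
    unfolding is_col_def by blast+
  then show thesis ..
qed

lemma row_exists:
  assumes "finite P" "u \<in> P"
  obtains L where "is_row P L" "u \<in> L"
proof -
  obtain K where "is_col (prod.swap ` P) K" "prod.swap u \<in> K"
    using col_exists[of "prod.swap ` P" "prod.swap u"] assms by blast
  then have "is_row P (prod.swap ` K)" "u \<in> prod.swap ` K"
    using is_col_swap[of P "prod.swap ` K"] by (auto intro: rev_image_eqI[of "prod.swap u"])
  then show thesis ..
qed

lemma lines_through_cell:
  assumes "finite P" "c \<in> P"
  obtains K L where "is_col P K" "is_row P L" "c \<in> K" "c \<in> L"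
proof -
  obtain K where "is_col P K" "c \<in> K"
    using col_exists[OF assms] .
  moreover obtain L where "is_row P L" "c \<in> L"
    using row_exists[OF assms] .
  ultimately show thesis
    using that by blast
qed

lemma same_col_in_rect:
  assumes K: "is_col P K" and "u \<in> K" and ab: "rect a b \<subseteq> P"
    and "u \<in> rect a b" "v \<in> rect a b" "fst v = fst u"
  shows "v \<in> K"
proof -
  obtain p q where pq: "fst p \<le> fst q" "snd p \<le> snd q" and K_def: "K = rect p q"
    and "K \<subseteq> P" and vert: "\<forall>c\<in>K. \<forall>d\<in>K. fst c = fst d"
    and max: "\<not> (\<exists>R. is_vrect_in P R \<and> K \<subset> R)"
    using K unfolding is_col_def is_vrect_in_def is_rect_in_def by blast
  have "p \<in> K" "q \<in> K"
    using pq by (auto simp: K_def rect_def)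
  then have "fst p = fst u" "fst q = fst u"
    using vert \<open>u \<in> K\<close> by blast+
  \<comment> \<open>\<open>K\<close> prolonged up to \<open>v\<close>; it stays in \<open>P\<close> thanks to the segment from \<open>u\<close> to \<open>v\<close>
    inside \<open>rect a b\<close>\<close>
  define K' where "K' = rect (fst u, min (snd p) (snd v)) (fst u, max (snd q) (snd v))"
  have "K' \<subseteq> P"
  proof
    fix c assume "c \<in> K'"
    show "c \<in> P"
    proof (cases "c \<in> K")
      case False
      then have "c \<in> rect a b"
        using \<open>c \<in> K'\<close> assms(2,4-6) \<open>fst p = fst u\<close> \<open>fst q = fst u\<close>
        by (auto simp: K_def K'_def rect_def)
      then show ?thesis using ab by blast
    qed (use \<open>K \<subseteq> P\<close> in blast)
  qed
  then have "is_rect_in P K'"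
    unfolding K'_def using pq by (intro is_rect_in_rectI) auto
  then have "is_vrect_in P K'"
    unfolding is_vrect_in_def by (auto simp: K'_def rect_def)
  moreover have "K \<subseteq> K'"
    using \<open>fst p = fst u\<close> \<open>fst q = fst u\<close> by (auto simp: K_def K'_def rect_def)
  ultimately have "K' = K"
    using max by blast
  moreover have "v \<in> K'"
    using \<open>fst v = fst u\<close> by (auto simp: K'_def rect_def)
  ultimately show ?thesis by simp
qed

lemma same_row_in_rect:
  assumes "is_row P L" "u \<in> L" "rect a b \<subseteq> P" "u \<in> rect a b" "v \<in> rect a b" "snd v = snd u"
  shows "v \<in> L"
proof -
  have "is_col (prod.swap ` P) (prod.swap ` L)"
    using assms(1) by (simp add: is_col_swap)
  moreover have "rect (prod.swap a) (prod.swap b) \<subseteq> prod.swap ` P"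
    using assms(3) by (simp add: image_mono flip: swap_rect)
  moreover have "prod.swap u \<in> rect (prod.swap a) (prod.swap b)" "prod.swap v \<in> rect (prod.swap a) (prod.swap b)"
    using assms(4,5) by (simp_all flip: swap_rect)
  ultimately have "prod.swap v \<in> prod.swap ` L"
    using same_col_in_rect assms(2,6) by (metis fst_swap image_eqI)
  then show ?thesis
    by (simp add: inj_image_mem_iff)
qed

lemma col_rect:
  assumes "is_col P K"
  obtains a b where "K = rect a b" "rect a b \<subseteq> P"
  using assms unfolding is_col_def is_vrect_in_def is_rect_in_def by blast

lemma col_unique:
  assumes "is_col P K" "is_col P K'" "c \<in> K" "c \<in> K'"
  shows "K = K'"
proof -
  have "K' \<subseteq> K" if "is_col P K" "is_col P K'" "c \<in> K" "c \<in> K'" for K K'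
  proof
    fix v assume "v \<in> K'"
    obtain a b where "K' = rect a b" "rect a b \<subseteq> P"
      using col_rect[OF \<open>is_col P K'\<close>] .
    then show "v \<in> K"
      using same_col_in_rect[OF that(1,3)] that(2,4) \<open>v \<in> K'\<close> col_fst_eq by metis
  qed
  then show ?thesis
    using assms by blast
qed

lemma row_unique:
  assumes "is_row P L" "is_row P L'" "c \<in> L" "c \<in> L'"
  shows "L = L'"
proof -
  have "prod.swap ` L = prod.swap ` L'"
    using assms by (intro col_unique[of "prod.swap ` P" _ _ "prod.swap c"]) (simp_all add: is_col_swap)
  then show ?thesis
    by (simp add: inj_image_eq_iff)
qed

lemma attacks_iff_in_lines:
  assumes "is_col P K" "is_row P L" "c \<in> K" "c \<in> L"
  shows "attacks P t c \<longleftrightarrow> t \<noteq> c \<and> (t \<in> K \<or> t \<in> L)"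
  using assms col_unique row_unique unfolding attacks_def by metis

lemma rect_corner_mem: "u \<in> rect a b \<Longrightarrow> v \<in> rect a b \<Longrightarrow> (fst u, snd v) \<in> rect a b"
  by (simp add: rect_def)

lemma line_through_corner:
  assumes "is_row P M \<or> is_col P M" "rect a b \<subseteq> P" "u \<in> rect a b" "v \<in> rect a b"
    and "(fst u, snd v) \<in> M"
  shows "u \<in> M \<or> v \<in> M"
proof -
  have "(fst u, snd v) \<in> rect a b"
    using assms(3,4) by (rule rect_corner_mem)
  then show ?thesis
    using assms same_row_in_rect same_col_in_rect by (metis fst_conv snd_conv)
qed

lemma attacks_sym: "attacks P c d \<longleftrightarrow> attacks P d c"
  unfolding attacks_def by blast

lemma rook_config_line_unique:
  assumes "rook_config P k C" "is_row P M \<or> is_col P M" "t \<in> C" "t' \<in> C" "t \<in> M" "t' \<in> M"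
  shows "t = t'"
  using assms unfolding rook_config_def attacks_def by blast

lemma rook_config_inj_on_fst_rect:
  assumes "finite P" "rook_config P k C" "rect a b \<subseteq> P"
  shows "inj_on fst (C \<inter> rect a b)"
proof (rule inj_onI)
  fix u v assume u: "u \<in> C \<inter> rect a b" and v: "v \<in> C \<inter> rect a b" and "fst u = fst v"
  have "u \<in> P"
    using u assms(3) by blast
  then obtain K where "is_col P K" "u \<in> K"
    using col_exists[OF assms(1)] by blast
  moreover have "v \<in> K"
    using same_col_in_rect[OF calculation assms(3)] u v \<open>fst u = fst v\<close> by simp
  ultimately show "u = v"
    using rook_config_line_unique[OF assms(2)] u v by blast
qed

lemma rook_config_inj_on_snd_rect:
  assumes "finite P" "rook_config P k C" "rect a b \<subseteq> P"
  shows "inj_on snd (C \<inter> rect a b)"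
proof (rule inj_onI)
  fix u v assume u: "u \<in> C \<inter> rect a b" and v: "v \<in> C \<inter> rect a b" and "snd u = snd v"
  have "u \<in> P"
    using u assms(3) by blast
  then obtain L where "is_row P L" "u \<in> L"
    using row_exists[OF assms(1)] by blast
  moreover have "v \<in> L"
    using same_row_in_rect[OF calculation assms(3)] u v \<open>snd u = snd v\<close> by simp
  ultimately show "u = v"
    using rook_config_line_unique[OF assms(2)] u v by blast
qed

lemma rook_config_replace_in_rect:
  assumes C: "rook_config P k C" and B: "B = rect a b" "B \<subseteq> P"
    and N: "N \<subseteq> B" "finite N" "card N = card (C \<inter> B)"
    and fst_N: "fst ` N \<subseteq> fst ` (C \<inter> B)" and snd_N: "snd ` N \<subseteq> snd ` (C \<inter> B)"
    and "inj_on fst N" "inj_on snd N"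
  shows "rook_config P k ((C - B) \<union> N)"
proof -
  have "finite C" "C \<subseteq> P" "card C = k"
    using C unfolding rook_config_def by auto
  have within_N: "\<not> attacks P p q" if "p \<in> N" "q \<in> N" for p q
  proof
    assume "attacks P p q"
    then have "p \<noteq> q" "fst p = fst q \<or> snd p = snd q"
      unfolding attacks_def using col_fst_eq row_snd_eq by blast+
    then show False
      using that \<open>inj_on fst N\<close> \<open>inj_on snd N\<close> by (meson inj_onD)
  qed
  have N_outside: "\<not> attacks P p c" if "p \<in> N" "c \<in> C - B" for p c
  proof
    assume "attacks P p c"
    then obtain M where M: "is_row P M \<or> is_col P M" "p \<in> M" "c \<in> M"
      unfolding attacks_def by blast
    have "fst p \<in> fst ` (C \<inter> B)" "snd p \<in> snd ` (C \<inter> B)"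
      using fst_N snd_N \<open>p \<in> N\<close> by blast+
    then obtain u w where u: "u \<in> C \<inter> B" "fst u = fst p" and w: "w \<in> C \<inter> B" "snd w = snd p"
      by (metis imageE)
    have "(fst u, snd w) \<in> M"
      using u w M(2) by simp
    then have "u \<in> M \<or> w \<in> M"
      using line_through_corner[OF M(1)] B u w by blast
    moreover have "u \<noteq> c" "w \<noteq> c"
      using u w that(2) by blast+
    ultimately have "attacks P u c \<or> attacks P w c"
      using M unfolding attacks_def by blast
    then show False
      using C u w that(2) unfolding rook_config_def by blast
  qed
  have "card ((C - B) \<union> N) = card (C - B) + card (C \<inter> B)"
    using N \<open>finite C\<close> by (subst card_Un_disjoint) auto
  also have "\<dots> = k"
    using card_Int_Diff[OF \<open>finite C\<close>, of B] \<open>card C = k\<close> by simp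
  finally have "card ((C - B) \<union> N) = k" .
  moreover have "\<not> attacks P x y" if "x \<in> (C - B) \<union> N" "y \<in> (C - B) \<union> N" for x y
  proof (cases "x \<in> N"; cases "y \<in> N")
    assume "x \<notin> N" "y \<notin> N"
    then show ?thesis
      using C that unfolding rook_config_def by blast
  qed (use that within_N N_outside attacks_sym in blast)+
  ultimately show ?thesis
    using \<open>finite C\<close> \<open>C \<subseteq> P\<close> N B unfolding rook_config_def by blast
qed

lemma rook_config_canon_step:
  assumes "finite P" "is_rect_in P B" "rook_config P k C"
  shows "rook_config P k (canon_step B C)"
proof -
  obtain a b where B: "B = rect a b" "B \<subseteq> P"
    using assms(2) unfolding is_rect_in_def by blast
  define D where "D = C \<inter> B"
  define xs where "xs = sorted_list_of_set (fst ` D)"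
  define ys where "ys = sorted_list_of_set (snd ` D)"
  have "finite D"
    using assms(3) unfolding D_def rook_config_def by blast
  moreover have "inj_on fst D" "inj_on snd D"
    using rook_config_inj_on_fst_rect[OF assms(1,3)] rook_config_inj_on_snd_rect[OF assms(1,3)] B
    unfolding D_def by auto
  ultimately have xs: "distinct xs" "set xs = fst ` D" "length xs = card D"
    and ys: "distinct ys" "set ys = snd ` D" "length ys = card D"
    unfolding xs_def ys_def by (simp_all add: card_image)
  have "map fst (zip xs ys) = xs" "map snd (zip xs ys) = ys"
    using xs(3) ys(3) by simp_all
  then have fst_zip: "fst ` set (zip xs ys) = fst ` D" "inj_on fst (set (zip xs ys))"
    and snd_zip: "snd ` set (zip xs ys) = snd ` D" "inj_on snd (set (zip xs ys))"
    using xs ys by (metis distinct_map list.set_map)+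
  have "set (zip xs ys) \<subseteq> B"
  proof
    fix p assume "p \<in> set (zip xs ys)"
    then obtain u w where "u \<in> D" "fst p = fst u" "w \<in> D" "snd p = snd w"
      using fst_zip(1) snd_zip(1) by (metis image_eqI imageE)
    then show "p \<in> B"
      using rect_corner_mem[of u a b w] B unfolding D_def by (metis Int_iff prod.collapse)
  qed
  moreover have "card (set (zip xs ys)) = card D"
    using xs ys by (simp add: distinct_card distinct_zipI1)
  moreover have "canon_step B C = (C - B) \<union> set (zip xs ys)"
    unfolding canon_step_def xs_def ys_def D_def ..
  ultimately show ?thesis
    using rook_config_replace_in_rect[OF assms(3) B] fst_zip snd_zip unfolding D_def by simp
qed

lemma rook_config_canonical:
  assumes "finite P" "\<forall>B\<in>set Bs. is_rect_in P B" "rook_config P k C"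
  shows "rook_config P k (canonical Bs C)"
  using assms(2,3) unfolding canonical_def
proof (induction Bs arbitrary: C)
  case (Cons B Bs)
  then show ?case
    using rook_config_canon_step[OF assms(1)] by simp
qed simp

lemma le_rook_number:
  assumes "finite P" "rook_config P k C"
  shows "k \<le> rook_number P"
proof -
  have "{k. \<exists>C. rook_config P k C} \<subseteq> {..card P}"
    using assms(1) by (auto simp: rook_config_def intro: card_mono)
  then have "finite {k. \<exists>C. rook_config P k C}"
    using finite_subset by blast
  then show ?thesis
    unfolding rook_number_def using assms(2) by (intro Max_ge) auto
qed

lemma rook_config_insert:
  assumes S: "rook_config P k S" and "is_col P K" "is_row P L" "c \<in> K" "c \<in> L"
    and "S \<inter> K = {}" "S \<inter> L = {}"
  shows "rook_config P (Suc k) (insert c S)"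
proof -
  have "c \<in> P"
    using line_subset assms(2,4) by blast
  moreover have "c \<notin> S"
    using assms(4,6) by blast
  moreover have "\<not> attacks P s c" if "s \<in> S" for s
    using attacks_iff_in_lines[OF assms(2-5)] assms(6,7) that by blast
  ultimately show ?thesis
    using S attacks_sym unfolding rook_config_def attacks_def by auto
qed

lemma attackers_of_cell_card:
  assumes T: "rook_config P k T" and K: "is_col P K" and L: "is_row P L" and "c \<in> K" "c \<in> L"
    and "c \<notin> T" and "T \<inter> K \<noteq> {}" "T \<inter> L \<noteq> {}"
  shows "card {t \<in> T. attacks P t c} = 2"
proof -
  obtain tk tl where tk: "tk \<in> T" "tk \<in> K" and tl: "tl \<in> T" "tl \<in> L"
    using assms(7,8) by blast
  have "{t \<in> T. attacks P t c} = {tk, tl}"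
    using attacks_iff_in_lines[OF K L assms(4,5)] rook_config_line_unique[OF T] K L tk tl \<open>c \<notin> T\<close>
    by blast
  moreover have "tk \<noteq> tl"
  proof
    assume "tk = tl"
    then have "fst tk = fst c" "snd tk = snd c"
      using col_fst_eq[OF K] row_snd_eq[OF L] tk tl assms(4,5) by blast+
    then show False
      using tk \<open>c \<notin> T\<close> by (metis prod_eqI)
  qed
  ultimately show ?thesis
    by simp
qed

lemma switch_preserves_empty_line:
  assumes "switch P C C'" "is_row P M \<or> is_col P M" "C \<inter> M = {}"
  shows "C' \<inter> M = {}"
proof -
  obtain a b where "a \<in> C" "b \<in> C" "fst a < fst b"
    and R: "rect (fst a, min (snd a) (snd b)) (fst b, max (snd a) (snd b)) \<subseteq> P"
    and C': "C' = (C - {a, b}) \<union> {(fst a, snd b), (fst b, snd a)}"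
    using assms(1) unfolding switch_def by blast
  have "a \<in> rect (fst a, min (snd a) (snd b)) (fst b, max (snd a) (snd b))"
    "b \<in> rect (fst a, min (snd a) (snd b)) (fst b, max (snd a) (snd b))"
    using \<open>fst a < fst b\<close> by (auto simp: rect_def)
  then have "(fst a, snd b) \<notin> M" "(fst b, snd a) \<notin> M"
    using line_through_corner[OF assms(2) R] \<open>a \<in> C\<close> \<open>b \<in> C\<close> assms(3) by blast+
  then show ?thesis
    using assms(3) unfolding C' by blast
qed

lemma switches_preserve_empty_line:
  assumes "(switch P)\<^sup>*\<^sup>* C C'" "is_row P M \<or> is_col P M" "C \<inter> M = {}"
  shows "C' \<inter> M = {}"
  using assms(1,3) by induction (use switch_preserves_empty_line[OF _ assms(2)] in blast)+

lemma switching_rook_coeff_one_connected: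
  assumes "switching_rook_coeff P k = 1" "rook_config P k T" "rook_config P k T'"
  shows "(switch P)\<^sup>*\<^sup>* T T'"
proof -
  let ?A = "{C. rook_config P k C}" and ?r = "switch_equiv P k"
  obtain S where S: "?A // ?r = {S}"
    using assms(1) unfolding switching_rook_coeff_def by (auto simp: card_Suc_eq)
  have "?r `` {T} = S" "?r `` {T'} = S"
    using assms(2,3) S quotientI[of _ ?A ?r] by auto
  moreover have "T' \<in> ?r `` {T'}"
    using assms(3) by (simp add: switch_equiv_def)
  ultimately have "(T, T') \<in> ?r"
    by (metis Image_singleton_iff)
  then show ?thesis
    by (simp add: switch_equiv_def)
qed

lemma max_rook_config_meets_lines:
  assumes P: "finite P" and coeff: "switching_rook_coeff P (rook_number P) = 1"
    and T: "rook_config P (rook_number P) T"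
    and K: "is_col P K" and L: "is_row P L" and "c \<in> K" "c \<in> L"
  shows "T \<inter> K \<noteq> {} \<and> T \<inter> L \<noteq> {}"
proof -
  let ?d = "rook_number P"
  \<comment> \<open>\<open>M\<close> and \<open>N\<close> are the column and the row of \<open>c\<close> in either order
    (possibly \<open>K = L = {c}\<close>)\<close>
  have exchange: "T \<inter> M \<noteq> {}" if "T \<inter> N \<noteq> {}" and MN: "{M, N} = {K, L}" for M N
  proof
    assume "T \<inter> M = {}"
    obtain t where t: "t \<in> T" "t \<in> N"
      using \<open>T \<inter> N \<noteq> {}\<close> by blast
    have "is_row P N \<or> is_col P N" "is_row P M \<or> is_col P M" "c \<in> M"
      using MN K L assms(6,7) by (metis insert_iff singletonD)+
    then have "(T - {t}) \<inter> N = {}"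
      using rook_config_line_unique[OF T] t by blast
    moreover have "K \<in> {M, N}" "L \<in> {M, N}"
      using MN by blast+
    ultimately have "(T - {t}) \<inter> K = {}" "(T - {t}) \<inter> L = {}"
      using \<open>T \<inter> M = {}\<close> by auto
    moreover have "rook_config P (?d - 1) (T - {t})"
      using T t unfolding rook_config_def by auto
    ultimately have "rook_config P (Suc (?d - 1)) (insert c (T - {t}))"
      using rook_config_insert K L assms(6,7) by blast
    moreover have "0 < ?d"
      using T t unfolding rook_config_def by (metis card_gt_0_iff empty_iff)
    ultimately have "(switch P)\<^sup>*\<^sup>* T (insert c (T - {t}))"
      using switching_rook_coeff_one_connected[OF coeff T] by (simp add: Suc_pred)
    then have "insert c (T - {t}) \<inter> M = {}"
      using switches_preserve_empty_line \<open>is_row P M \<or> is_col P M\<close> \<open>T \<inter> M = {}\<close> by blast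
    then show False
      using \<open>c \<in> M\<close> by blast
  qed
  have "T \<inter> K \<noteq> {} \<or> T \<inter> L \<noteq> {}"
  proof (rule ccontr)
    assume "\<not> ?thesis"
    then have "rook_config P (Suc ?d) (insert c T)"
      using rook_config_insert[OF T K L assms(6,7)] by blast
    then show False
      using le_rook_number[OF P] by fastforce
  qed
  then show ?thesis
    using exchange[of K L] exchange[of L K] by blast
qed

lemma max_rook_config_meets_line:
  assumes P: "finite P" and coeff: "switching_rook_coeff P (rook_number P) = 1"
    and T: "rook_config P (rook_number P) T" and M: "is_row P M \<or> is_col P M"
  shows "T \<inter> M \<noteq> {}"
proof -
  obtain c where "c \<in> M"
    using line_nonempty[OF M] by blast
  moreover have "c \<in> P"
    using line_subset[OF M] calculation by blast
  then obtain K L where KL: "is_col P K" "is_row P L" "c \<in> K" "c \<in> L"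
    using lines_through_cell[OF P] by blast
  ultimately have "M = K \<or> M = L"
    using M col_unique row_unique by blast
  then show ?thesis
    using max_rook_config_meets_lines[OF P coeff T KL] by blast
qed

theorem lemma4p1:
  fixes P :: "cell set" and Bs :: "cell set list" and C :: "cell set"
  assumes "collection P"
    and "distinct Bs" and "set Bs = {B. is_max_rect P B}"
    and "switching_rook_coeff P (rook_number P) = 1"
    and "rook_config P (rook_number P) C"
  shows "(\<forall>K. is_col P K \<longrightarrow> (\<exists>t\<in>canonical Bs C. t \<in> K))
       \<and> (\<forall>K. is_row P K \<longrightarrow> (\<exists>t\<in>canonical Bs C. t \<in> K))
       \<and> (\<forall>c\<in>P - canonical Bs C. card {t \<in> canonical Bs C. attacks P t c} = 2)"
proof -
  let ?T = "canonical Bs C"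
  have P: "finite P"
    using assms(1) unfolding collection_def by blast
  have "\<forall>B\<in>set Bs. is_rect_in P B"
    using assms(3) unfolding is_max_rect_def by blast
  then have T: "rook_config P (rook_number P) ?T"
    using rook_config_canonical[OF P _ assms(5)] by blast
  have occupied: "?T \<inter> M \<noteq> {}" if "is_row P M \<or> is_col P M" for M
    using max_rook_config_meets_line[OF P assms(4) T that] .
  have "card {t \<in> ?T. attacks P t c} = 2" if c: "c \<in> P - ?T" for c
  proof -
    obtain K L where KL: "is_col P K" "is_row P L" "c \<in> K" "c \<in> L"
      using lines_through_cell[OF P] c by blast
    show ?thesis
      using occupied KL c by (intro attackers_of_cell_card[OF T KL]) auto
  qed
  then show ?thesis
    using occupied by blast
qed

end
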